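(* $\mathcal K\big(\boldsymbol\zeta(n)\big)=\mathbb{C}[M_{n,n}]^{ad_{gl(n)}}$, where $\boldsymbol\zeta(n)$ is the center of $\mathbf{U}(gl(n))$ and $\mathbb{C}[M_{n,n}]^{ad_{gl(n)}}=\{\mathbf p\in\mathbb{C}[M_{n,n}]:(D^l_{ij}-D^r_{ji})(\mathbf p)=0\ \text{for all } i,j\}$.
   Context: $\mathbb{C}[M_{n,n}]$: polynomial algebra in commuting indeterminates $(i|j)$, $1\le i,j\le n$. $D^l_{ij}$ is the derivation of $\mathbb{C}[M_{n,n}]$ with $D^l_{ij}((a|b))=\delta_{ja}(i|b)$; $D^r_{ji}$ is the derivation with $D^r_{ji}((a|b))=\delta_{ib}(a|j)$. Koszul map: $\rho_{ij}=D^l_{ij}+$ multiplication by $(i|j)$; $\tau:\mathbf{U}(gl(n))\to\mathrm{End}(\mathbb{C}[M_{n,n}])$ the algebra morphism with $\tau(e_{ij})=\rho_{ij}$; $\mathcal K(\mathbf P)=\tau(\mathbf P)(1)$ (a linear bijection $\mathbf{U}(gl(n))\to\mathbb{C}[M_{n,n}]$). *)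

theory Defs
  imports Complex_Main "HOL-Library.Poly_Mapping"
begin

text \<open>Variables are index pairs (a,b), standing for (a|b); monomials are
finitely supported exponent maps; polynomials are finitely supported
coefficient maps (product = convolution, from HOL-Library.Poly_Mapping).\<close>

type_synonym cpoly = "((nat \<times> nat) \<Rightarrow>\<^sub>0 nat) \<Rightarrow>\<^sub>0 complex"

definition X :: "nat \<Rightarrow> nat \<Rightarrow> cpoly" where
  "X a b = Poly_Mapping.single (Poly_Mapping.single (a, b) 1) 1"

definition cconst :: "complex \<Rightarrow> cpoly" where
  "cconst c = Poly_Mapping.single 0 c"

definition CM :: "nat \<Rightarrow> cpoly set" where
  "CM n = Collect (\<lambda>p. \<forall>m \<in> Poly_Mapping.keys p. Poly_Mapping.keys m \<subseteq> {1..n} \<times> {1..n})"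

definition pd :: "nat \<times> nat \<Rightarrow> cpoly \<Rightarrow> cpoly" where
  "pd v p = (\<Sum>m \<in> Poly_Mapping.keys p. if 0 < Poly_Mapping.lookup m v
      then Poly_Mapping.single (m - Poly_Mapping.single v 1)
             (of_nat (Poly_Mapping.lookup m v) * Poly_Mapping.lookup p m)
      else 0)"

text \<open>D^l_{ij}: the derivation with D^l_{ij}((a|b)) = delta_{ja} (i|b).\<close>
definition Dl :: "nat \<Rightarrow> nat \<Rightarrow> nat \<Rightarrow> cpoly \<Rightarrow> cpoly" where
  "Dl n i j p = (\<Sum>b \<in> {1..n}. X i b * pd (j, b) p)"

text \<open>D^r_{ji}: the derivation with D^r_{ji}((a|b)) = delta_{ib} (a|j).\<close>
definition Dr :: "nat \<Rightarrow> nat \<Rightarrow> nat \<Rightarrow> cpoly \<Rightarrow> cpoly" where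
  "Dr n j i p = (\<Sum>a \<in> {1..n}. X a j * pd (a, i) p)"

definition rho :: "nat \<Rightarrow> nat \<Rightarrow> nat \<Rightarrow> cpoly \<Rightarrow> cpoly" where
  "rho n i j p = Dl n i j p + X i j * p"

definition Inv :: "nat \<Rightarrow> cpoly set" where
  "Inv n = {p \<in> CM n. \<forall>i \<in> {1..n}. \<forall>j \<in> {1..n}. Dl n i j p - Dr n j i p = 0}"

text \<open>Free associative algebra on letters (i,j) (standing for e_{ij}):
finitely supported maps from words to coefficients.\<close>

type_synonym fword = "(nat \<times> nat) list \<Rightarrow>\<^sub>0 complex"

definition fmul :: "fword \<Rightarrow> fword \<Rightarrow> fword" where
  "fmul p q = (\<Sum>u \<in> Poly_Mapping.keys p. \<Sum>w \<in> Poly_Mapping.keys q.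
       Poly_Mapping.single (u @ w) (Poly_Mapping.lookup p u * Poly_Mapping.lookup q w))"

definition E :: "nat \<Rightarrow> nat \<Rightarrow> fword" where
  "E i j = Poly_Mapping.single [(i, j)] 1"

definition kdelta :: "nat \<Rightarrow> nat \<Rightarrow> complex" where
  "kdelta a b = (if a = b then 1 else 0)"

definition Fr :: "nat \<Rightarrow> fword set" where
  "Fr n = Collect (\<lambda>p. \<forall>u \<in> Poly_Mapping.keys p. set u \<subseteq> {1..n} \<times> {1..n})"

definition glrel :: "nat \<Rightarrow> nat \<Rightarrow> nat \<Rightarrow> nat \<Rightarrow> fword" where
  "glrel i j k l = fmul (E i j) (E k l) - fmul (E k l) (E i j)
     - (fmul (Poly_Mapping.single [] (kdelta j k)) (E i l)
        - fmul (Poly_Mapping.single [] (kdelta l i)) (E k j))"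

inductive_set UIdeal :: "nat \<Rightarrow> fword set" for n where
  zero: "0 \<in> UIdeal n"
| add: "p \<in> UIdeal n \<Longrightarrow> q \<in> UIdeal n \<Longrightarrow> p + q \<in> UIdeal n"
| gen: "a \<in> Fr n \<Longrightarrow> b \<in> Fr n \<Longrightarrow> i \<in> {1..n} \<Longrightarrow> j \<in> {1..n} \<Longrightarrow>
        k \<in> {1..n} \<Longrightarrow> l \<in> {1..n} \<Longrightarrow>
        fmul a (fmul (glrel i j k l) b) \<in> UIdeal n"

text \<open>Representatives of the center zeta(n) of U(gl(n)) = Fr n / UIdeal n:
P is central iff [e_ij, P] lies in the ideal for all generators.\<close>
definition Center :: "nat \<Rightarrow> fword set" where
  "Center n = {P \<in> Fr n. \<forall>i \<in> {1..n}. \<forall>j \<in> {1..n}.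
      fmul (E i j) P - fmul P (E i j) \<in> UIdeal n}"

fun rho_word :: "nat \<Rightarrow> (nat \<times> nat) list \<Rightarrow> cpoly \<Rightarrow> cpoly" where
  "rho_word n [] f = f"
| "rho_word n (x # xs) f = rho n (fst x) (snd x) (rho_word n xs f)"

definition tau :: "nat \<Rightarrow> fword \<Rightarrow> cpoly \<Rightarrow> cpoly" where
  "tau n P f = (\<Sum>u \<in> Poly_Mapping.keys P. cconst (Poly_Mapping.lookup P u) * rho_word n u f)"

definition Koszul :: "nat \<Rightarrow> fword \<Rightarrow> cpoly" where
  "Koszul n P = tau n P 1"

end

theory Submission
  imports Defs "HOL-Library.Product_Lexorder" "HOL-Library.Multiset"
begin

text \<open>The Koszul map turns left multiplication by \<open>e\<^sub>i\<^sub>j\<close> into \<open>\<rho>\<^sub>i\<^sub>j\<close> and right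
multiplication by \<open>e\<^sub>i\<^sub>j\<close> into \<open>(i|j) + D\<^sup>r\<^sub>j\<^sub>i\<close>, an operator commuting with every
\<open>\<rho>\<^sub>k\<^sub>l\<close>. Hence \<open>K(e\<^sub>i\<^sub>j P - P e\<^sub>i\<^sub>j) = (D\<^sup>l\<^sub>i\<^sub>j - D\<^sup>r\<^sub>j\<^sub>i) K(P)\<close>, and \<open>P\<close> is central
exactly when \<open>K(P)\<close> is invariant, once the kernel of \<open>K\<close> on the free algebra is known to
be the ideal of the relations of \<open>gl(n)\<close>. Modulo that ideal every element is a
combination of ordered words (PBW), and \<open>K\<close> maps an ordered word to a polynomial whose
leading monomial is the product of its letters; so \<open>K\<close> is injective on such
combinations, and the same leading-term argument shows that \<open>K\<close> is onto \<open>\<complex>[M\<^sub>n\<^sub>,\<^sub>n]\<close>.\<close>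

text \<open>With concatenation as addition on words, the convolution product of
\<open>fword\<close> is the free-algebra product \<open>fmul\<close>.\<close>

instantiation list :: (type) monoid_add
begin
definition plus_list :: "'a list \<Rightarrow> 'a list \<Rightarrow> 'a list" where "plus_list u w = u @ w"
definition zero_list :: "'a list" where "zero_list = []"
instance by standard (auto simp: plus_list_def zero_list_def)
end

abbreviation index_pairs :: "nat \<Rightarrow> (nat \<times> nat) set" where
  "index_pairs n \<equiv> {1..n} \<times> {1..n}"

lemma sum_single_lookup:
  "(\<Sum>k\<in>Poly_Mapping.keys p. Poly_Mapping.single k (Poly_Mapping.lookup p k)) = p"
proof (rule poly_mapping_eqI)
  fix x
  show "Poly_Mapping.lookup (\<Sum>k\<in>Poly_Mapping.keys p. Poly_Mapping.single k (Poly_Mapping.lookup p k)) x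
      = Poly_Mapping.lookup p x"
    by (simp add: lookup_sum lookup_single when_def sum.delta in_keys_iff)
qed

lemma additive_eq_on_single:
  fixes F G :: "('a \<Rightarrow>\<^sub>0 'b::ab_group_add) \<Rightarrow> 'c::ab_group_add"
  assumes "additive F" "additive G"
    and "\<And>k c. F (Poly_Mapping.single k c) = G (Poly_Mapping.single k c)"
  shows "F p = G p"
  by (metis (no_types, lifting) assms additive.sum sum.cong sum_single_lookup)

definition supported_on :: "'a set \<Rightarrow> ('a \<Rightarrow>\<^sub>0 'b::zero) set" where
  "supported_on S = {p. Poly_Mapping.keys p \<subseteq> S}"

lemma supported_on_iff: "p \<in> supported_on S \<longleftrightarrow> (\<forall>k. Poly_Mapping.lookup p k \<noteq> 0 \<longrightarrow> k \<in> S)"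
  by (auto simp: supported_on_def in_keys_iff)

lemma supported_on_zero: "0 \<in> supported_on S"
  by (simp add: supported_on_def)

lemma supported_on_add:
  "p \<in> supported_on S \<Longrightarrow> q \<in> supported_on S \<Longrightarrow> p + q \<in> supported_on S"
  using keys_add[of p q] by (auto simp: supported_on_def)

lemma supported_on_diff:
  fixes p q :: "'a \<Rightarrow>\<^sub>0 'b::ab_group_add"
  shows "p \<in> supported_on S \<Longrightarrow> q \<in> supported_on S \<Longrightarrow> p - q \<in> supported_on S"
  using keys_diff[of p q] by (auto simp: supported_on_def)

lemma supported_on_sum:
  "(\<And>a. a \<in> A \<Longrightarrow> g a \<in> supported_on S) \<Longrightarrow> sum g A \<in> supported_on S"
  by (induction A rule: infinite_finite_induct) (simp_all add: supported_on_zero supported_on_add)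

lemma supported_on_single: "k \<in> S \<Longrightarrow> Poly_Mapping.single k c \<in> supported_on S"
  by (simp add: supported_on_def)

lemma supported_on_mono: "p \<in> supported_on S \<Longrightarrow> S \<subseteq> T \<Longrightarrow> p \<in> supported_on T"
  by (auto simp: supported_on_def)

lemma supported_on_mult:
  "p \<in> supported_on S \<Longrightarrow> q \<in> supported_on T \<Longrightarrow> p * q \<in> supported_on {a + b |a b. a \<in> S \<and> b \<in> T}"
  unfolding supported_on_def using keys_mult[of p q] by blast

section \<open>The polynomial algebra\<close>

definition var_mon :: "'a \<Rightarrow> 'a \<Rightarrow>\<^sub>0 nat" where
  "var_mon v = Poly_Mapping.single v 1"

lemma lookup_var_mon: "Poly_Mapping.lookup (var_mon v) w = (if v = w then 1 else 0)"
  by (simp add: var_mon_def lookup_single when_def)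

lemma lookup_minus_nat:
  "Poly_Mapping.lookup (m - m') k = Poly_Mapping.lookup m k - Poly_Mapping.lookup (m' :: 'a \<Rightarrow>\<^sub>0 nat) k"
  by (simp add: minus_poly_mapping.rep_eq)

lemma minus_var_mon_add:
  "0 < Poly_Mapping.lookup m v \<Longrightarrow> m - var_mon v + var_mon v = m"
  by (rule poly_mapping_eqI) (auto simp: lookup_add lookup_var_mon lookup_minus_nat)

lemma var_mon_add_eq_iff:
  "var_mon v + k = m \<longleftrightarrow> 0 < Poly_Mapping.lookup m v \<and> k = m - var_mon v"
proof
  assume "var_mon v + k = m"
  moreover have "var_mon v + k - var_mon v = k"
    by (rule poly_mapping_eqI) (simp add: lookup_add lookup_var_mon lookup_minus_nat)
  ultimately show "0 < Poly_Mapping.lookup m v \<and> k = m - var_mon v"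
    by (auto simp: lookup_add lookup_var_mon)
qed (metis add.commute minus_var_mon_add)

lemma lookup_cconst_mult: "Poly_Mapping.lookup (cconst c * f) m = c * Poly_Mapping.lookup f m"
  by (simp add: cconst_def flip: mult_map_scale_conv_mult) (simp add: map.rep_eq when_def)

lemma keys_cconst_mult: "Poly_Mapping.keys (cconst c * f) \<subseteq> Poly_Mapping.keys f"
  by (auto simp: in_keys_iff lookup_cconst_mult)

lemma lookup_X_mult:
  "Poly_Mapping.lookup (X a b * f) m =
    (if 0 < Poly_Mapping.lookup m (a, b) then Poly_Mapping.lookup f (m - var_mon (a, b)) else 0)"
proof -
  have "X a b * f = (\<Sum>k\<in>Poly_Mapping.keys f.
      Poly_Mapping.single (var_mon (a, b) + k) (Poly_Mapping.lookup f k))"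
    by (subst (1) sum_single_lookup[of f, symmetric])
       (simp add: sum_distrib_left X_def mult_single var_mon_def)
  then have "Poly_Mapping.lookup (X a b * f) m = (\<Sum>k\<in>Poly_Mapping.keys f.
      if k = m - var_mon (a, b) \<and> 0 < Poly_Mapping.lookup m (a, b) then Poly_Mapping.lookup f k else 0)"
    by (auto simp: lookup_sum lookup_single when_def var_mon_add_eq_iff intro: sum.cong)
  then show ?thesis
    by (cases "0 < Poly_Mapping.lookup m (a, b)") (simp_all add: sum.delta' in_keys_iff)
qed

lemma keys_X_mult:
  "Poly_Mapping.keys (X a b * f) \<subseteq> (\<lambda>m. m + var_mon (a, b)) ` Poly_Mapping.keys f"
proof
  fix m assume "m \<in> Poly_Mapping.keys (X a b * f)"
  then have "0 < Poly_Mapping.lookup m (a, b)" "m - var_mon (a, b) \<in> Poly_Mapping.keys f"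
    by (auto simp: in_keys_iff lookup_X_mult split: if_splits)
  then show "m \<in> (\<lambda>m. m + var_mon (a, b)) ` Poly_Mapping.keys f"
    using minus_var_mon_add by (metis image_eqI)
qed

lemma lookup_pd:
  "Poly_Mapping.lookup (pd v p) m = of_nat (Poly_Mapping.lookup m v + 1) * Poly_Mapping.lookup p (m + var_mon v)"
proof -
  have shift: "0 < Poly_Mapping.lookup k v \<and> k - var_mon v = m \<longleftrightarrow> k = m + var_mon v" for k
    using var_mon_add_eq_iff[of v m k] by (auto simp: add.commute)
  have "Poly_Mapping.lookup (pd v p) m = (\<Sum>k\<in>Poly_Mapping.keys p.
      if k = m + var_mon v then of_nat (Poly_Mapping.lookup k v) * Poly_Mapping.lookup p k else 0)"
    unfolding pd_def lookup_sum
    by (intro sum.cong refl, use shift in \<open>auto simp: lookup_single when_def var_mon_def\<close>)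
  also have "\<dots> = of_nat (Poly_Mapping.lookup m v + 1) * Poly_Mapping.lookup p (m + var_mon v)"
    by (simp add: sum.delta' in_keys_iff lookup_add lookup_var_mon)
  finally show ?thesis .
qed

lemma keys_pd: "Poly_Mapping.keys (pd v p) \<subseteq> (\<lambda>m. m - var_mon v) ` Poly_Mapping.keys p"
proof
  fix m assume "m \<in> Poly_Mapping.keys (pd v p)"
  then have "m + var_mon v \<in> Poly_Mapping.keys p" by (simp add: in_keys_iff lookup_pd)
  moreover have "m = m + var_mon v - var_mon v"
    by (rule poly_mapping_eqI) (simp add: lookup_add lookup_minus_nat)
  ultimately show "m \<in> (\<lambda>m. m - var_mon v) ` Poly_Mapping.keys p" by blast
qed

lemma additive_pd: "additive (pd v)"
  by standard (rule poly_mapping_eqI, simp add: lookup_pd lookup_add distrib_left)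

lemma pd_cconst_mult: "pd v (cconst c * f) = cconst c * pd v f"
  by (rule poly_mapping_eqI) (simp add: lookup_pd lookup_cconst_mult)

lemma pd_one [simp]: "pd v 1 = 0"
proof (rule poly_mapping_eqI)
  fix m
  have "m + var_mon v \<noteq> 0"
    by (metis lookup_add lookup_var_mon lookup_zero add_is_0 one_neq_zero)
  then show "Poly_Mapping.lookup (pd v 1) m = Poly_Mapping.lookup 0 m"
    by (simp add: lookup_pd lookup_one)
qed

lemma pd_X_mult: "pd v (X a b * f) = (if v = (a, b) then f else 0) + X a b * pd v f"
proof (rule poly_mapping_eqI)
  fix m
  have shift: "m - var_mon (a, b) + var_mon v = m + var_mon v - var_mon (a, b)"
    if "0 < Poly_Mapping.lookup m (a, b)"
    using that by (intro poly_mapping_eqI) (auto simp: lookup_add lookup_var_mon lookup_minus_nat)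
  show "Poly_Mapping.lookup (pd v (X a b * f)) m
      = Poly_Mapping.lookup ((if v = (a, b) then f else 0) + X a b * pd v f) m"
  proof (cases "v = (a, b)")
    case True
    have "Poly_Mapping.lookup (X a b * pd v f) m = of_nat (Poly_Mapping.lookup m v) * Poly_Mapping.lookup f m"
      using True minus_var_mon_add[of m v]
      by (cases "0 < Poly_Mapping.lookup m v") (simp_all add: lookup_pd lookup_X_mult lookup_minus_nat lookup_var_mon)
    then show ?thesis
      using True by (simp add: lookup_pd lookup_X_mult lookup_add lookup_var_mon distrib_right)
  next
    case False
    then show ?thesis
      using shift by (simp add: lookup_add lookup_pd lookup_X_mult lookup_var_mon lookup_minus_nat)
  qed
qed

lemma pd_commute: "pd v (pd w f) = pd w (pd v f)"
  by (rule poly_mapping_eqI) (cases "v = w", simp_all add: lookup_pd lookup_add lookup_var_mon add_ac mult_ac)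

section \<open>The operators \<open>D\<^sup>l\<close>, \<open>D\<^sup>r\<close> and \<open>\<rho>\<close>\<close>

lemma additive_Dl: "additive (Dl n i j)"
  by standard (simp add: Dl_def additive.add[OF additive_pd] distrib_left sum.distrib)

lemma additive_Dr: "additive (Dr n j i)"
  by standard (simp add: Dr_def additive.add[OF additive_pd] distrib_left sum.distrib)

lemma Dl_cconst_mult: "Dl n i j (cconst c * f) = cconst c * Dl n i j f"
  unfolding Dl_def pd_cconst_mult sum_distrib_left by (simp add: mult.left_commute)

lemma Dr_cconst_mult: "Dr n j i (cconst c * f) = cconst c * Dr n j i f"
  unfolding Dr_def pd_cconst_mult sum_distrib_left by (simp add: mult.left_commute)

lemma Dl_one [simp]: "Dl n i j 1 = 0"
  by (simp add: Dl_def)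

lemma Dr_one [simp]: "Dr n j i 1 = 0"
  by (simp add: Dr_def)

lemma sum_if_eq_conj:
  "finite A \<Longrightarrow> (\<Sum>b\<in>A. if b = l \<and> P then g b else 0) = (if l \<in> A \<and> P then g l else 0)"
  by (cases P) (simp_all add: sum.delta')

lemma Dl_X_mult:
  "Dl n i j (X k l * f) = (if j = k \<and> l \<in> {1..n} then X i l * f else 0) + X k l * Dl n i j f"
proof -
  have "Dl n i j (X k l * f) = (\<Sum>b\<in>{1..n}.
      (if b = l \<and> j = k then X i b * f else 0) + X k l * (X i b * pd (j, b) f))"
    unfolding Dl_def pd_X_mult by (rule sum.cong) (auto simp: distrib_left mult_ac)
  then show ?thesis
    by (simp add: sum.distrib sum_if_eq_conj Dl_def sum_distrib_left conj_commute)
qed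

lemma Dr_X_mult:
  "Dr n j i (X k l * f) = (if l = i \<and> k \<in> {1..n} then X k j * f else 0) + X k l * Dr n j i f"
proof -
  have "Dr n j i (X k l * f) = (\<Sum>a\<in>{1..n}.
      (if a = k \<and> l = i then X a j * f else 0) + X k l * (X a j * pd (a, i) f))"
    unfolding Dr_def pd_X_mult by (rule sum.cong) (auto simp: distrib_left mult_ac)
  then show ?thesis
    by (simp add: sum.distrib sum_if_eq_conj Dr_def sum_distrib_left conj_commute)
qed

lemma Dl_Dl_eq:
  "Dl n i j (Dl n k l f) = (if j = k then Dl n i l f else 0)
     + (\<Sum>b\<in>{1..n}. \<Sum>c\<in>{1..n}. X i b * X k c * pd (j, b) (pd (l, c) f))"
proof -
  have "Dl n i j (Dl n k l f) = (\<Sum>b\<in>{1..n}. X i b * (\<Sum>c\<in>{1..n}.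
        (if c = b \<and> j = k then pd (l, c) f else 0) + X k c * pd (j, b) (pd (l, c) f)))"
    unfolding Dl_def[of n k l] Dl_def[of n i j] additive.sum[OF additive_pd] pd_X_mult
    by (intro sum.cong refl arg_cong2[where f = "(*)"]) auto
  also have "\<dots> = (\<Sum>b\<in>{1..n}. (if j = k then X i b * pd (l, b) f else 0)
        + (\<Sum>c\<in>{1..n}. X i b * X k c * pd (j, b) (pd (l, c) f)))"
    by (intro sum.cong refl)
       (auto simp: sum.distrib sum_if_eq_conj distrib_left sum_distrib_left mult_ac)
  finally show ?thesis
    by (simp add: sum.distrib Dl_def)
qed

lemma Dl_commutator:
  "Dl n i j (Dl n k l f) - Dl n k l (Dl n i j f)
     = (if j = k then Dl n i l f else 0) - (if l = i then Dl n k j f else 0)"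
proof -
  have "(\<Sum>b\<in>{1..n}. \<Sum>c\<in>{1..n}. X i b * X k c * pd (j, b) (pd (l, c) f))
      = (\<Sum>c\<in>{1..n}. \<Sum>b\<in>{1..n}. X k c * X i b * pd (l, c) (pd (j, b) f))"
    by (subst sum.swap) (simp add: pd_commute mult_ac)
  then show ?thesis
    by (simp add: Dl_Dl_eq)
qed

lemma Dl_Dr_eq:
  assumes "j \<in> {1..n}" "l \<in> {1..n}"
  shows "Dl n k l (Dr n j i f) = X k j * pd (l, i) f
     + (\<Sum>b\<in>{1..n}. \<Sum>a\<in>{1..n}. X k b * X a j * pd (l, b) (pd (a, i) f))"
proof -
  have "Dl n k l (Dr n j i f) = (\<Sum>b\<in>{1..n}. X k b * (\<Sum>a\<in>{1..n}.
        (if a = l \<and> b = j then pd (a, i) f else 0) + X a j * pd (l, b) (pd (a, i) f)))"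
    unfolding Dl_def[of n k l] Dr_def[of n j i] additive.sum[OF additive_pd] pd_X_mult
    by (intro sum.cong refl arg_cong2[where f = "(*)"]) auto
  also have "\<dots> = (\<Sum>b\<in>{1..n}. (if b = j \<and> True then X k b * pd (l, i) f else 0)
        + (\<Sum>a\<in>{1..n}. X k b * X a j * pd (l, b) (pd (a, i) f)))"
    using assms by (intro sum.cong refl)
      (auto simp: sum.distrib sum_if_eq_conj distrib_left sum_distrib_left mult_ac)
  finally show ?thesis
    using assms by (simp only: sum.distrib sum_if_eq_conj finite_atLeastAtMost) simp
qed

lemma Dr_Dl_eq:
  assumes "i \<in> {1..n}" "k \<in> {1..n}"
  shows "Dr n j i (Dl n k l f) = X k j * pd (l, i) f
     + (\<Sum>a\<in>{1..n}. \<Sum>b\<in>{1..n}. X a j * X k b * pd (a, i) (pd (l, b) f))"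
proof -
  have "Dr n j i (Dl n k l f) = (\<Sum>a\<in>{1..n}. X a j * (\<Sum>b\<in>{1..n}.
        (if b = i \<and> a = k then pd (l, b) f else 0) + X k b * pd (a, i) (pd (l, b) f)))"
    unfolding Dl_def[of n k l] Dr_def[of n j i] additive.sum[OF additive_pd] pd_X_mult
    by (intro sum.cong refl arg_cong2[where f = "(*)"]) auto
  also have "\<dots> = (\<Sum>a\<in>{1..n}. (if a = k \<and> True then X a j * pd (l, i) f else 0)
        + (\<Sum>b\<in>{1..n}. X a j * X k b * pd (a, i) (pd (l, b) f)))"
    using assms by (intro sum.cong refl)
      (auto simp: sum.distrib sum_if_eq_conj distrib_left sum_distrib_left mult_ac)
  finally show ?thesis
    using assms by (simp only: sum.distrib sum_if_eq_conj finite_atLeastAtMost) simp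
qed

lemma Dl_Dr_commute:
  assumes "i \<in> {1..n}" "j \<in> {1..n}" "k \<in> {1..n}" "l \<in> {1..n}"
  shows "Dl n k l (Dr n j i f) = Dr n j i (Dl n k l f)"
proof -
  have "(\<Sum>b\<in>{1..n}. \<Sum>a\<in>{1..n}. X k b * X a j * pd (l, b) (pd (a, i) f))
      = (\<Sum>a\<in>{1..n}. \<Sum>b\<in>{1..n}. X a j * X k b * pd (a, i) (pd (l, b) f))"
    by (subst sum.swap) (simp add: pd_commute mult_ac)
  then show ?thesis
    using assms by (simp add: Dl_Dr_eq Dr_Dl_eq)
qed

lemma additive_rho: "additive (rho n i j)"
  by standard (simp add: rho_def additive.add[OF additive_Dl] distrib_left)

lemma rho_cconst_mult: "rho n i j (cconst c * f) = cconst c * rho n i j f"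
  by (simp add: rho_def Dl_cconst_mult distrib_left mult.left_commute)

lemma rho_commutator:
  assumes "i \<in> {1..n}" "j \<in> {1..n}" "k \<in> {1..n}" "l \<in> {1..n}"
  shows "rho n i j (rho n k l f) - rho n k l (rho n i j f)
     = (if j = k then rho n i l f else 0) - (if l = i then rho n k j f else 0)"
proof -
  have "Dl n i j (Dl n k l f) = Dl n k l (Dl n i j f)
      + ((if j = k then Dl n i l f else 0) - (if l = i then Dl n k j f else 0))"
    using Dl_commutator[of n i j k l f] by (simp add: algebra_simps)
  then show ?thesis
    using assms by (simp add: rho_def additive.add[OF additive_Dl] Dl_X_mult distrib_left)
qed

text \<open>Under the Koszul map, right multiplication by \<open>e\<^sub>i\<^sub>j\<close> becomes \<open>rho_r n i j\<close>.\<close>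

definition rho_r :: "nat \<Rightarrow> nat \<Rightarrow> nat \<Rightarrow> cpoly \<Rightarrow> cpoly" where
  "rho_r n i j f = X i j * f + Dr n j i f"

lemma additive_rho_r: "additive (rho_r n i j)"
  by standard (simp add: rho_r_def additive.add[OF additive_Dr] distrib_left)

lemma rho_r_cconst_mult: "rho_r n i j (cconst c * f) = cconst c * rho_r n i j f"
  by (simp add: rho_r_def Dr_cconst_mult distrib_left mult.left_commute)

lemma rho_rho_r_commute:
  assumes "i \<in> {1..n}" "j \<in> {1..n}" "k \<in> {1..n}" "l \<in> {1..n}"
  shows "rho n k l (rho_r n i j f) = rho_r n i j (rho n k l f)"
  using assms
  by (simp add: rho_def rho_r_def additive.add[OF additive_Dl] additive.add[OF additive_Dr]
      Dl_X_mult Dr_X_mult Dl_Dr_commute distrib_left)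

section \<open>The Koszul map\<close>

lemma fmul_eq_times: "fmul p q = p * q"
proof -
  have "fmul p q = (\<Sum>u\<in>Poly_Mapping.keys p. Poly_Mapping.single u (Poly_Mapping.lookup p u)) *
      (\<Sum>w\<in>Poly_Mapping.keys q. Poly_Mapping.single w (Poly_Mapping.lookup q w))"
    by (simp add: fmul_def mult_single plus_list_def sum_product)
  then show ?thesis
    by (simp only: sum_single_lookup)
qed

lemma Fr_eq: "Fr n = supported_on {u. set u \<subseteq> index_pairs n}"
  by (auto simp: Fr_def supported_on_def)

lemma words_plus_closed: "{a + b |a b. a \<in> {u. set u \<subseteq> A} \<and> b \<in> {u. set u \<subseteq> A}} \<subseteq> {u. set u \<subseteq> A}"
  by (auto simp: plus_list_def)

lemma Fr_mult: "P \<in> Fr n \<Longrightarrow> Q \<in> Fr n \<Longrightarrow> P * Q \<in> Fr n"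
  unfolding Fr_eq by (rule supported_on_mono[OF supported_on_mult words_plus_closed])

lemma E_in_Fr: "i \<in> {1..n} \<Longrightarrow> j \<in> {1..n} \<Longrightarrow> E i j \<in> Fr n"
  by (simp add: Fr_eq E_def supported_on_single)

lemma cconst_mult_cconst: "cconst a * cconst b = cconst (a * b)"
  by (simp add: cconst_def mult_single)

lemma additive_rho_word: "additive (rho_word n u)"
  by standard (induction u; simp add: additive.add[OF additive_rho])

lemma rho_word_cconst_mult: "rho_word n u (cconst c * f) = cconst c * rho_word n u f"
  by (induction u) (simp_all add: rho_cconst_mult)

lemma rho_word_append: "rho_word n (u @ w) f = rho_word n u (rho_word n w f)"
  by (induction u) simp_all

lemma additive_tau: "additive (tau n P)"
  by standard (simp add: tau_def additive.add[OF additive_rho_word] distrib_left sum.distrib)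

lemma additive_tau_left: "additive (\<lambda>P. tau n P f)"
  by standard
    (unfold tau_def, rule setsum_keys_plus_distrib[where f = "\<lambda>u a. cconst a * rho_word n u f"],
      simp_all add: cconst_def single_add distrib_right)

lemma tau_single: "tau n (Poly_Mapping.single u c) f = cconst c * rho_word n u f"
  by (cases "c = 0") (simp_all add: tau_def cconst_def)

lemma tau_mult: "tau n (P * Q) f = tau n P (tau n Q f)"
proof -
  have single_mult: "tau n (Poly_Mapping.single u a * Q) f = tau n (Poly_Mapping.single u a) (tau n Q f)" for u a
  proof (rule additive_eq_on_single[where F = "\<lambda>Q. tau n (Poly_Mapping.single u a * Q) f"])
    show "additive (\<lambda>Q. tau n (Poly_Mapping.single u a * Q) f)"
      by standard (simp add: distrib_left additive.add[OF additive_tau_left])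
    show "additive (\<lambda>Q. tau n (Poly_Mapping.single u a) (tau n Q f))"
      by standard (simp add: additive.add[OF additive_tau_left] additive.add[OF additive_tau])
  qed (simp add: mult_single tau_single plus_list_def rho_word_append rho_word_cconst_mult
      mult.assoc cconst_mult_cconst)
  show ?thesis
  proof (rule additive_eq_on_single[where F = "\<lambda>P. tau n (P * Q) f"])
    show "additive (\<lambda>P. tau n (P * Q) f)"
      by standard (simp add: distrib_right additive.add[OF additive_tau_left])
  qed (simp_all add: single_mult additive_tau_left)
qed

lemma tau_E: "tau n (E i j) f = rho n i j f"
  by (simp add: E_def tau_single cconst_def)

lemma rho_word_commute:
  assumes "\<And>i j f. (i, j) \<in> set u \<Longrightarrow> rho n i j (R f) = R (rho n i j f)"
  shows "rho_word n u (R f) = R (rho_word n u f)"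
  using assms by (induction u) auto

lemma tau_commute:
  assumes "additive R" "\<And>c f. R (cconst c * f) = cconst c * R f" "P \<in> Fr n"
    and "\<And>i j f. i \<in> {1..n} \<Longrightarrow> j \<in> {1..n} \<Longrightarrow> rho n i j (R f) = R (rho n i j f)"
  shows "tau n P (R f) = R (tau n P f)"
proof -
  have "rho_word n u (R f) = R (rho_word n u f)" if "u \<in> Poly_Mapping.keys P" for u
  proof (rule rho_word_commute)
    fix i j g assume "(i, j) \<in> set u"
    then have "i \<in> {1..n}" "j \<in> {1..n}"
      using assms(3) that unfolding Fr_def by blast+
    then show "rho n i j (R g) = R (rho n i j g)"
      by (rule assms(4))
  qed
  then show ?thesis
    by (simp add: tau_def assms(2) additive.sum[OF assms(1)])
qed

lemma Koszul_commutator: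
  assumes "P \<in> Fr n" "i \<in> {1..n}" "j \<in> {1..n}"
  shows "Koszul n (E i j * P - P * E i j) = Dl n i j (Koszul n P) - Dr n j i (Koszul n P)"
proof -
  have "Koszul n (P * E i j) = tau n P (rho_r n i j 1)"
    by (simp add: Koszul_def tau_mult tau_E rho_def rho_r_def)
  also have "\<dots> = rho_r n i j (Koszul n P)"
    unfolding Koszul_def using assms
    by (intro tau_commute additive_rho_r rho_r_cconst_mult rho_rho_r_commute)
  finally show ?thesis
    by (simp add: Koszul_def additive.diff[OF additive_tau_left] tau_mult tau_E rho_def rho_r_def)
qed

lemma tau_glrel:
  assumes "i \<in> {1..n}" "j \<in> {1..n}" "k \<in> {1..n}" "l \<in> {1..n}"
  shows "tau n (glrel i j k l) f = 0"
  using rho_commutator[OF assms, of f]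
  by (simp add: glrel_def fmul_eq_times additive.diff[OF additive_tau_left] tau_mult tau_E
      tau_single kdelta_def cconst_def)

lemma tau_UIdeal: "P \<in> UIdeal n \<Longrightarrow> tau n P f = 0"
proof (induction P arbitrary: f rule: UIdeal.induct)
  case zero
  then show ?case by (simp add: tau_def)
next
  case (add p q)
  then show ?case by (simp add: additive.add[OF additive_tau_left])
next
  case (gen a b i j k l)
  then show ?case by (simp add: fmul_eq_times tau_mult tau_glrel additive.zero[OF additive_tau])
qed

section \<open>Leading terms\<close>

lemma CM_eq: "CM n = supported_on {m. Poly_Mapping.keys m \<subseteq> index_pairs n}"
  by (auto simp: CM_def supported_on_def)

lemma X_mult_in_CM:
  assumes "p \<in> CM n" "a \<in> {1..n}" "b \<in> {1..n}"
  shows "X a b * p \<in> CM n"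
proof -
  have "Poly_Mapping.keys (m + var_mon (a, b)) \<subseteq> index_pairs n"
    if "Poly_Mapping.keys m \<subseteq> index_pairs n" for m
    using that assms(2,3) keys_add[of m "var_mon (a, b)"] by (auto simp: var_mon_def)
  then show ?thesis
    using assms(1) keys_X_mult[of a b p] by (fastforce simp: CM_eq supported_on_def)
qed

lemma pd_in_CM:
  assumes "p \<in> CM n"
  shows "pd v p \<in> CM n"
proof -
  have "Poly_Mapping.keys (m - var_mon v) \<subseteq> Poly_Mapping.keys m" for m
    by (auto simp: in_keys_iff lookup_minus_nat)
  then show ?thesis
    using assms keys_pd[of v p] by (fastforce simp: CM_eq supported_on_def)
qed

lemma rho_in_CM:
  assumes "p \<in> CM n" "i \<in> {1..n}" "j \<in> {1..n}"
  shows "rho n i j p \<in> CM n"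
proof -
  have "Dl n i j p \<in> CM n"
    unfolding Dl_def CM_eq
    by (rule supported_on_sum, fold CM_eq) (use assms in \<open>simp add: X_mult_in_CM pd_in_CM\<close>)
  then show ?thesis
    unfolding rho_def CM_eq by (rule supported_on_add, fold CM_eq) (use assms in \<open>simp add: X_mult_in_CM\<close>)
qed

lemma rho_word_in_CM: "p \<in> CM n \<Longrightarrow> set u \<subseteq> index_pairs n \<Longrightarrow> rho_word n u p \<in> CM n"
  by (induction u) (auto simp: rho_in_CM)

lemma Koszul_in_CM:
  assumes "P \<in> Fr n"
  shows "Koszul n P \<in> CM n"
proof -
  have "cconst c * rho_word n u 1 \<in> CM n" if "set u \<subseteq> index_pairs n" for u c
    using keys_cconst_mult rho_word_in_CM[OF _ that, of 1]
    by (fastforce simp: CM_eq supported_on_def supported_on_single)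
  then show ?thesis
    using assms unfolding Koszul_def tau_def CM_eq
    by (intro supported_on_sum) (auto simp: Fr_def simp flip: CM_eq)
qed

definition total_degree :: "('a \<Rightarrow>\<^sub>0 nat) \<Rightarrow> nat" where
  "total_degree m = sum (Poly_Mapping.lookup m) (Poly_Mapping.keys m)"

lemma total_degree_eq_sum:
  "finite S \<Longrightarrow> Poly_Mapping.keys m \<subseteq> S \<Longrightarrow> total_degree m = sum (Poly_Mapping.lookup m) S"
  unfolding total_degree_def by (rule sum.mono_neutral_left) (auto simp: in_keys_iff)

lemma total_degree_add: "total_degree (m + m') = total_degree m + total_degree m'"
proof -
  let ?S = "Poly_Mapping.keys m \<union> Poly_Mapping.keys m'"
  have "total_degree (m + m') = sum (Poly_Mapping.lookup (m + m')) ?S"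
    by (rule total_degree_eq_sum) (auto simp: in_keys_iff lookup_add)
  then show ?thesis
    by (simp add: lookup_add sum.distrib total_degree_eq_sum[of ?S])
qed

lemma total_degree_zero [simp]: "total_degree 0 = 0"
  by (simp add: total_degree_def)

lemma total_degree_var_mon [simp]: "total_degree (var_mon v) = 1"
  by (simp add: total_degree_def var_mon_def)

definition deg_less :: "nat \<Rightarrow> cpoly set" where
  "deg_less d = supported_on {m. total_degree m < d}"

lemma X_mult_deg_less: "p \<in> deg_less d \<Longrightarrow> X a b * p \<in> deg_less (Suc d)"
  using keys_X_mult[of a b p] by (fastforce simp: deg_less_def supported_on_def total_degree_add)

lemma pd_deg_less:
  assumes "p \<in> deg_less (Suc d)"
  shows "pd v p \<in> deg_less d"
  unfolding deg_less_def supported_on_iff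
proof (intro allI impI)
  fix m assume "Poly_Mapping.lookup (pd v p) m \<noteq> 0"
  then have "Poly_Mapping.lookup p (m + var_mon v) \<noteq> 0"
    by (simp add: lookup_pd)
  then show "m \<in> {m. total_degree m < d}"
    using assms by (auto simp: deg_less_def supported_on_iff total_degree_add)
qed

lemma Dl_deg_less: "p \<in> deg_less (Suc d) \<Longrightarrow> Dl n i j p \<in> deg_less (Suc d)"
  unfolding Dl_def deg_less_def
  by (rule supported_on_sum, fold deg_less_def) (simp add: X_mult_deg_less pd_deg_less)

lemma deg_less_mono: "p \<in> deg_less d \<Longrightarrow> d \<le> d' \<Longrightarrow> p \<in> deg_less d'"
  unfolding deg_less_def by (erule supported_on_mono) auto

fun word_mon :: "(nat \<times> nat) list \<Rightarrow> (nat \<times> nat) \<Rightarrow>\<^sub>0 nat" where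
  "word_mon [] = 0"
| "word_mon (x # u) = var_mon x + word_mon u"

lemma total_degree_word_mon [simp]: "total_degree (word_mon u) = length u"
  by (induction u) (simp_all add: total_degree_add)

lemma lookup_word_mon: "Poly_Mapping.lookup (word_mon u) x = count (mset u) x"
  by (induction u) (auto simp: lookup_add lookup_var_mon)

lemma word_mon_inj_on_sorted:
  assumes "word_mon u = word_mon w" "sorted u" "sorted w"
  shows "u = w"
proof -
  have "mset u = mset w"
    by (rule multiset_eqI) (simp flip: lookup_word_mon add: assms(1))
  then show ?thesis
    using assms(2,3) by (metis sorted_sort_id properties_for_sort)
qed

lemma word_mon_surj:
  obtains u where "word_mon u = m" "set u \<subseteq> Poly_Mapping.keys m"
proof
  let ?M = "Abs_multiset (Poly_Mapping.lookup m)"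
  have count_M: "count ?M = Poly_Mapping.lookup m"
    by (rule count_Abs_multiset) simp
  show "word_mon (sorted_list_of_multiset ?M) = m"
    by (rule poly_mapping_eqI) (simp add: lookup_word_mon count_M)
  show "set (sorted_list_of_multiset ?M) \<subseteq> Poly_Mapping.keys m"
    by (auto simp: set_mset_def count_M in_keys_iff)
qed

text \<open>Only the multiplication parts of the \<open>\<rho>\<^sub>i\<^sub>j\<close> raise the degree.\<close>

lemma rho_word_leading:
  "rho_word n u 1 - Poly_Mapping.single (word_mon u) 1 \<in> deg_less (length u)"
proof (induction u)
  case Nil
  then show ?case by (simp add: deg_less_def supported_on_zero)
next
  case (Cons x u)
  obtain a b where x: "x = (a, b)" by (cases x)
  define r where "r = rho_word n u 1 - Poly_Mapping.single (word_mon u) 1"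
  have r: "r \<in> deg_less (length u)"
    using Cons r_def by simp
  have "Poly_Mapping.single (word_mon u) 1 \<in> deg_less (Suc (length u))"
    by (simp add: deg_less_def supported_on_single)
  moreover have "r \<in> deg_less (Suc (length u))"
    using r by (rule deg_less_mono) simp
  ultimately have "Poly_Mapping.single (word_mon u) 1 + r \<in> deg_less (Suc (length u))"
    unfolding deg_less_def by (rule supported_on_add)
  then have "Dl n a b (Poly_Mapping.single (word_mon u) 1 + r) + X a b * r \<in> deg_less (Suc (length u))"
    unfolding deg_less_def
    by (intro supported_on_add) (simp_all add: Dl_deg_less X_mult_deg_less r flip: deg_less_def)
  moreover have "rho_word n (x # u) 1 - Poly_Mapping.single (word_mon (x # u)) 1
      = Dl n a b (Poly_Mapping.single (word_mon u) 1 + r) + X a b * r"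
    by (simp add: x r_def rho_def right_diff_distrib X_def mult_single var_mon_def)
  ultimately show ?case
    by simp
qed

lemma lookup_rho_word_high:
  assumes "length u \<le> total_degree m"
  shows "Poly_Mapping.lookup (rho_word n u 1) m = (if m = word_mon u then 1 else 0)"
proof -
  have "Poly_Mapping.lookup (rho_word n u 1 - Poly_Mapping.single (word_mon u) 1) m = 0"
    using rho_word_leading[of n u] assms by (auto simp: deg_less_def supported_on_iff)
  then show ?thesis
    by (simp add: lookup_minus lookup_single when_def)
qed

lemma lookup_Koszul:
  "Poly_Mapping.lookup (Koszul n P) m
    = (\<Sum>u\<in>Poly_Mapping.keys P. Poly_Mapping.lookup P u * Poly_Mapping.lookup (rho_word n u 1) m)"
  by (simp add: Koszul_def tau_def lookup_sum lookup_cconst_mult)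

lemma Koszul_PBW_eq_0:
  assumes sorted: "\<And>u. u \<in> Poly_Mapping.keys Q \<Longrightarrow> sorted u" and "Koszul n Q = 0"
  shows "Q = 0"
proof (rule ccontr)
  assume "Q \<noteq> 0"
  then have "Max (length ` Poly_Mapping.keys Q) \<in> length ` Poly_Mapping.keys Q"
    by (intro Max_in) simp_all
  then obtain u0 where u0: "u0 \<in> Poly_Mapping.keys Q" "length u0 = Max (length ` Poly_Mapping.keys Q)"
    by (metis imageE)
  have "Poly_Mapping.lookup (rho_word n u 1) (word_mon u0) = (if u = u0 then 1 else 0)"
    if "u \<in> Poly_Mapping.keys Q" for u
  proof -
    have "length u \<le> total_degree (word_mon u0)"
      using that u0(2) by (simp add: Max_ge)
    moreover have "word_mon u0 = word_mon u \<longleftrightarrow> u = u0"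
      using word_mon_inj_on_sorted[of u0 u] sorted that u0(1) by auto
    ultimately show ?thesis
      by (simp add: lookup_rho_word_high)
  qed
  then have "Poly_Mapping.lookup (Koszul n Q) (word_mon u0)
      = (\<Sum>u\<in>Poly_Mapping.keys Q. if u = u0 then Poly_Mapping.lookup Q u else 0)"
    unfolding lookup_Koszul by (intro sum.cong) simp_all
  also have "\<dots> = Poly_Mapping.lookup Q u0"
    using u0(1) by simp
  finally show False
    using assms(2) u0(1) by (simp add: in_keys_iff)
qed

lemma additive_Koszul: "additive (Koszul n)"
  unfolding Koszul_def by (rule additive_tau_left)

lemma one_in_CM: "1 \<in> CM n"
  by (simp add: CM_def)

lemma single_in_Koszul_image:
  assumes "Poly_Mapping.keys m \<subseteq> index_pairs n"
    and lower: "\<And>p. p \<in> CM n \<Longrightarrow> p \<in> deg_less (total_degree m) \<Longrightarrow> p \<in> Koszul n ` Fr n"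
  shows "Poly_Mapping.single m c \<in> Koszul n ` Fr n"
proof -
  obtain u where u: "word_mon u = m" "set u \<subseteq> Poly_Mapping.keys m"
    by (rule word_mon_surj)
  then have u_range: "set u \<subseteq> index_pairs n"
    using assms(1) by blast
  define r where "r = rho_word n u 1 - Poly_Mapping.single m 1"
  have "rho_word n u 1 \<in> CM n"
    by (rule rho_word_in_CM[OF one_in_CM u_range])
  moreover have "Poly_Mapping.single m 1 \<in> CM n"
    using assms(1) by (simp add: CM_eq supported_on_single)
  ultimately have "r \<in> CM n"
    unfolding r_def CM_eq by (rule supported_on_diff)
  moreover have "r \<in> deg_less (total_degree m)"
    using rho_word_leading[of n u] by (simp add: r_def flip: u(1))
  ultimately obtain R where R: "R \<in> Fr n" "Koszul n R = r"
    using lower by blast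
  have "Koszul n (Poly_Mapping.single u c - Poly_Mapping.single [] c * R) = cconst c * (rho_word n u 1 - r)"
    using R(2) unfolding Koszul_def
    by (simp add: additive.diff[OF additive_tau_left] tau_single tau_mult right_diff_distrib)
  also have "\<dots> = Poly_Mapping.single m c"
    by (simp add: r_def cconst_def mult_single)
  finally have "Poly_Mapping.single m c = Koszul n (Poly_Mapping.single u c - Poly_Mapping.single [] c * R)"
    by (rule sym)
  moreover have "Poly_Mapping.single u c - Poly_Mapping.single [] c * R \<in> Fr n"
    using R(1) u_range Fr_mult[of "Poly_Mapping.single [] c" n R]
    by (simp add: Fr_eq supported_on_diff supported_on_single)
  ultimately show ?thesis
    by (rule image_eqI[where f = "Koszul n"])
qed

lemma Koszul_image_deg_less: "p \<in> CM n \<Longrightarrow> p \<in> deg_less d \<Longrightarrow> p \<in> Koszul n ` Fr n"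
proof (induction d arbitrary: p)
  case 0
  then have "p = Koszul n 0"
    by (simp add: deg_less_def supported_on_def additive.zero[OF additive_Koszul])
  moreover have "0 \<in> Fr n"
    by (simp add: Fr_eq supported_on_zero)
  ultimately show ?case
    by (rule image_eqI[where f = "Koszul n"])
next
  case (Suc d)
  have "\<forall>m\<in>Poly_Mapping.keys p. \<exists>P. P \<in> Fr n \<and> Koszul n P = Poly_Mapping.single m (Poly_Mapping.lookup p m)"
  proof
    fix m assume m: "m \<in> Poly_Mapping.keys p"
    have "total_degree m \<le> d"
      using Suc.prems(2) m by (auto simp: deg_less_def supported_on_def)
    have "Poly_Mapping.single m (Poly_Mapping.lookup p m) \<in> Koszul n ` Fr n"
    proof (rule single_in_Koszul_image)
      show "Poly_Mapping.keys m \<subseteq> index_pairs n"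
        using Suc.prems(1) m unfolding CM_def by blast
      show "q \<in> Koszul n ` Fr n" if "q \<in> CM n" "q \<in> deg_less (total_degree m)" for q
        by (rule Suc.IH[OF that(1) deg_less_mono[OF that(2) \<open>total_degree m \<le> d\<close>]])
    qed
    then show "\<exists>P. P \<in> Fr n \<and> Koszul n P = Poly_Mapping.single m (Poly_Mapping.lookup p m)"
      by auto
  qed
  from bchoice[OF this] obtain P where P: "\<forall>m\<in>Poly_Mapping.keys p.
      P m \<in> Fr n \<and> Koszul n (P m) = Poly_Mapping.single m (Poly_Mapping.lookup p m)" ..
  have "p = Koszul n (\<Sum>m\<in>Poly_Mapping.keys p. P m)"
    using P by (simp add: additive.sum[OF additive_Koszul] sum_single_lookup)
  moreover have "(\<Sum>m\<in>Poly_Mapping.keys p. P m) \<in> Fr n"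
    unfolding Fr_eq by (rule supported_on_sum, fold Fr_eq) (use P in blast)
  ultimately show ?case
    by (rule image_eqI[where f = "Koszul n"])
qed

lemma Koszul_image_Fr: "Koszul n ` Fr n = CM n"
proof
  show "CM n \<subseteq> Koszul n ` Fr n"
  proof
    fix p assume "p \<in> CM n"
    moreover have "p \<in> deg_less (Suc (Max (total_degree ` Poly_Mapping.keys p)))"
      by (auto simp: deg_less_def supported_on_def less_Suc_eq_le intro: Max_ge)
    ultimately show "p \<in> Koszul n ` Fr n"
      by (rule Koszul_image_deg_less)
  qed
qed (auto simp: Koszul_in_CM)

section \<open>Reduction to ordered words\<close>

lemma UIdeal_mult_left: "p \<in> UIdeal n \<Longrightarrow> c \<in> Fr n \<Longrightarrow> c * p \<in> UIdeal n"
proof (induction p rule: UIdeal.induct)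
  case zero
  then show ?case by (simp add: UIdeal.zero)
next
  case (add p q)
  then show ?case by (simp add: distrib_left UIdeal.add)
next
  case (gen a b i j k l)
  have "fmul (c * a) (fmul (glrel i j k l) b) \<in> UIdeal n"
    using gen by (intro UIdeal.gen Fr_mult)
  then show ?case
    by (simp add: fmul_eq_times mult.assoc)
qed

lemma Fr_diff: "P \<in> Fr n \<Longrightarrow> Q \<in> Fr n \<Longrightarrow> P - Q \<in> Fr n"
  unfolding Fr_eq by (rule supported_on_diff)

lemma scalar_in_Fr: "Poly_Mapping.single [] c \<in> Fr n"
  by (simp add: Fr_eq supported_on_single)

definition PBW_span :: "nat \<Rightarrow> fword set" where
  "PBW_span n = supported_on {u. sorted u \<and> set u \<subseteq> index_pairs n}"

definition PBW_reducible :: "nat \<Rightarrow> fword \<Rightarrow> bool" where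
  "PBW_reducible n P \<longleftrightarrow> (\<exists>S\<in>PBW_span n. P - S \<in> UIdeal n)"

lemma UIdeal_PBW_reducible: "P \<in> UIdeal n \<Longrightarrow> PBW_reducible n P"
  unfolding PBW_reducible_def PBW_span_def using supported_on_zero by force

lemma PBW_reducible_add:
  assumes "PBW_reducible n P" "PBW_reducible n Q"
  shows "PBW_reducible n (P + Q)"
proof -
  obtain S T where "S \<in> PBW_span n" "P - S \<in> UIdeal n" "T \<in> PBW_span n" "Q - T \<in> UIdeal n"
    using assms by (auto simp: PBW_reducible_def)
  then show ?thesis
    unfolding PBW_reducible_def PBW_span_def
    by (intro bexI[of _ "S + T"]) (simp_all add: add_diff_add UIdeal.add supported_on_add)
qed

lemma PBW_reducible_sum:
  "(\<And>a. a \<in> A \<Longrightarrow> PBW_reducible n (g a)) \<Longrightarrow> PBW_reducible n (sum g A)"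
  by (induction A rule: infinite_finite_induct)
    (simp_all add: UIdeal_PBW_reducible UIdeal.zero PBW_reducible_add)

lemma PBW_reducible_scale:
  assumes "PBW_reducible n P"
  shows "PBW_reducible n (Poly_Mapping.single [] c * P)"
proof -
  obtain S where S: "S \<in> PBW_span n" "P - S \<in> UIdeal n"
    using assms by (auto simp: PBW_reducible_def)
  have "Poly_Mapping.single [] c * S \<in> PBW_span n"
    using supported_on_mult[OF supported_on_single[OF singletonI] S(1)[unfolded PBW_span_def]]
    unfolding PBW_span_def by (rule supported_on_mono) (auto simp: plus_list_def)
  moreover have "Poly_Mapping.single [] c * P - Poly_Mapping.single [] c * S \<in> UIdeal n"
    using UIdeal_mult_left[OF S(2) scalar_in_Fr] by (simp add: right_diff_distrib)
  ultimately show ?thesis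
    unfolding PBW_reducible_def by blast
qed

lemma single_Nil_mult_single:
  "Poly_Mapping.single [] (c::complex) * Poly_Mapping.single u 1 = Poly_Mapping.single u c"
  by (simp add: mult_single plus_list_def)

lemma swap_letters_mod_UIdeal:
  assumes "set a \<subseteq> index_pairs n" "set b \<subseteq> index_pairs n"
    and "(i, j) \<in> index_pairs n" "(k, l) \<in> index_pairs n"
  shows "Poly_Mapping.single (a @ (i, j) # (k, l) # b) 1 - Poly_Mapping.single (a @ (k, l) # (i, j) # b) 1
    - Poly_Mapping.single (a @ (i, l) # b) (kdelta j k) + Poly_Mapping.single (a @ (k, j) # b) (kdelta l i)
    \<in> UIdeal n"
proof -
  have "fmul (Poly_Mapping.single a 1) (fmul (glrel i j k l) (Poly_Mapping.single b 1)) \<in> UIdeal n"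
    using assms by (intro UIdeal.gen) (auto simp: Fr_eq supported_on_single)
  then show ?thesis
    by (simp add: glrel_def fmul_eq_times E_def mult_single plus_list_def algebra_simps single_Nil_mult_single)
qed

lemma PBW_reducible_swap:
  assumes ranges: "set a \<subseteq> index_pairs n" "set b \<subseteq> index_pairs n"
      "(i, j) \<in> index_pairs n" "(k, l) \<in> index_pairs n"
    and swapped: "PBW_reducible n (Poly_Mapping.single (a @ (k, l) # (i, j) # b) 1)"
    and contracted: "PBW_reducible n (Poly_Mapping.single (a @ (i, l) # b) 1)"
      "PBW_reducible n (Poly_Mapping.single (a @ (k, j) # b) 1)"
  shows "PBW_reducible n (Poly_Mapping.single (a @ (i, j) # (k, l) # b) 1)"
proof -
  define G where "G = Poly_Mapping.single (a @ (i, j) # (k, l) # b) 1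
    - Poly_Mapping.single (a @ (k, l) # (i, j) # b) 1
    - Poly_Mapping.single (a @ (i, l) # b) (kdelta j k) + Poly_Mapping.single (a @ (k, j) # b) (kdelta l i)"
  have "PBW_reducible n G"
    unfolding G_def by (intro UIdeal_PBW_reducible swap_letters_mod_UIdeal ranges)
  moreover have "PBW_reducible n (Poly_Mapping.single (a @ (i, l) # b) (kdelta j k))"
    using PBW_reducible_scale[OF contracted(1), of "kdelta j k"] by (simp only: single_Nil_mult_single)
  moreover have "PBW_reducible n (Poly_Mapping.single (a @ (k, j) # b) (- kdelta l i))"
    using PBW_reducible_scale[OF contracted(2), of "- kdelta l i"] by (simp only: single_Nil_mult_single)
  ultimately have "PBW_reducible n (G + Poly_Mapping.single (a @ (k, l) # (i, j) # b) 1
      + Poly_Mapping.single (a @ (i, l) # b) (kdelta j k) + Poly_Mapping.single (a @ (k, j) # b) (- kdelta l i))"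
    using swapped by (intro PBW_reducible_add)
  moreover have "G + Poly_Mapping.single (a @ (k, l) # (i, j) # b) 1
      + Poly_Mapping.single (a @ (i, l) # b) (kdelta j k) + Poly_Mapping.single (a @ (k, j) # b) (- kdelta l i)
      = Poly_Mapping.single (a @ (i, j) # (k, l) # b) 1"
  proof -
    have "A - B - C + D + B + C + - D = A" for A B C D :: fword
      by (simp add: algebra_simps)
    then show ?thesis
      unfolding G_def single_uminus .
  qed
  ultimately show ?thesis
    by simp
qed

fun inversion_count :: "'a::linorder list \<Rightarrow> nat" where
  "inversion_count [] = 0"
| "inversion_count (x # u) = length (filter (\<lambda>y. y < x) u) + inversion_count u"

lemma inversion_count_swap:
  "y < x \<Longrightarrow> inversion_count (a @ y # x # b) < inversion_count (a @ x # y # b)"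
  by (induction a) simp_all

lemma unsorted_split: "\<not> sorted u \<Longrightarrow> \<exists>a x y b. u = a @ x # y # b \<and> y < x"
proof (induction u)
  case (Cons z u)
  show ?case
  proof (cases "sorted u")
    case True
    then obtain y w where "u = y # w" "y < z"
      using Cons.prems by (cases u) (auto simp: not_le)
    then show ?thesis
      by (intro exI[of _ "[]"]) auto
  next
    case False
    then obtain a x y b where "u = a @ x # y # b" "y < x"
      using Cons.IH by blast
    then show ?thesis
      by (intro exI[of _ "z # a"]) auto
  qed
qed simp

text \<open>Induction on the length and then on the number of inversions: modulo the ideal,
swapping two adjacent letters changes a word only by shorter words.\<close>

lemma word_PBW_reducible:
  "set u \<subseteq> index_pairs n \<Longrightarrow> PBW_reducible n (Poly_Mapping.single u 1)"
proof (induction u rule: wf_induct_rule[OF wf_measures[of "[length, inversion_count]"], case_names less])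
  case (less u)
  show ?case
  proof (cases "sorted u")
    case True
    then have "Poly_Mapping.single u 1 \<in> PBW_span n"
      using less.prems by (simp add: PBW_span_def supported_on_single)
    then show ?thesis
      unfolding PBW_reducible_def by (metis UIdeal.zero diff_self)
  next
    case False
    then obtain a x y b where "u = a @ x # y # b" "y < x"
      using unsorted_split by blast
    moreover obtain i j k l where "x = (i, j)" "y = (k, l)"
      by (cases x, cases y)
    ultimately have u: "u = a @ (i, j) # (k, l) # b" "(k, l) < (i, j)"
      by simp_all
    have ranges: "set a \<subseteq> index_pairs n" "set b \<subseteq> index_pairs n"
      "(i, j) \<in> index_pairs n" "(k, l) \<in> index_pairs n"
      using less.prems unfolding u(1) by simp_all
    have swap: "(a @ (k, l) # (i, j) # b, u) \<in> measures [length, inversion_count]"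
      using inversion_count_swap[OF u(2)] by (simp add: u)
    have contract: "(a @ (i, l) # b, u) \<in> measures [length, inversion_count]"
      "(a @ (k, j) # b, u) \<in> measures [length, inversion_count]"
      by (simp_all add: u)
    show ?thesis
      unfolding u(1)
      by (rule PBW_reducible_swap[OF ranges less.IH[OF swap] less.IH[OF contract(1)] less.IH[OF contract(2)]])
        (use ranges in simp_all)
  qed
qed

lemma Fr_PBW_reducible:
  assumes "P \<in> Fr n"
  shows "PBW_reducible n P"
proof -
  have "PBW_reducible n (\<Sum>u\<in>Poly_Mapping.keys P. Poly_Mapping.single [] (Poly_Mapping.lookup P u) * Poly_Mapping.single u 1)"
    using assms by (intro PBW_reducible_sum PBW_reducible_scale word_PBW_reducible) (auto simp: Fr_def)
  then show ?thesis
    by (simp add: single_Nil_mult_single sum_single_lookup)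
qed

section \<open>The center\<close>

lemma Koszul_eq_0_iff_UIdeal:
  assumes "P \<in> Fr n"
  shows "Koszul n P = 0 \<longleftrightarrow> P \<in> UIdeal n"
proof
  assume K: "Koszul n P = 0"
  obtain S where S: "S \<in> PBW_span n" "P - S \<in> UIdeal n"
    using Fr_PBW_reducible[OF assms] by (auto simp: PBW_reducible_def)
  have "Koszul n S = 0"
    using K tau_UIdeal[OF S(2)] by (simp add: Koszul_def additive.diff[OF additive_tau_left])
  then have "S = 0"
    using S(1) by (intro Koszul_PBW_eq_0) (auto simp: PBW_span_def supported_on_def)
  then show "P \<in> UIdeal n"
    using S(2) by simp
qed (simp add: Koszul_def tau_UIdeal)

lemma Center_iff_Koszul_Inv: "P \<in> Center n \<longleftrightarrow> P \<in> Fr n \<and> Koszul n P \<in> Inv n"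
proof (cases "P \<in> Fr n")
  case True
  have "fmul (E i j) P - fmul P (E i j) \<in> UIdeal n \<longleftrightarrow> Dl n i j (Koszul n P) - Dr n j i (Koszul n P) = 0"
    if "i \<in> {1..n}" "j \<in> {1..n}" for i j
    using Koszul_eq_0_iff_UIdeal[of "E i j * P - P * E i j" n] Koszul_commutator[OF True that]
      True that by (simp add: fmul_eq_times Fr_diff Fr_mult E_in_Fr)
  then show ?thesis
    using True Koszul_in_CM by (simp add: Center_def Inv_def)
qed (simp add: Center_def)

theorem mainTheorem14:
  fixes n :: nat
  shows "Koszul n ` Center n = Inv n"
proof -
  have "Center n = {P \<in> Fr n. Koszul n P \<in> Inv n}"
    using Center_iff_Koszul_Inv by blast
  then have "Koszul n ` Center n = Koszul n ` Fr n \<inter> Inv n"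
    by blast
  also have "\<dots> = Inv n"
    using Koszul_image_Fr by (auto simp: Inv_def)
  finally show ?thesis .
qed

end
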